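(* Let $G$ be a finite, simple, connected, undirected graph of order $n\ge 2$ and let $A\subseteq V(G)$ be nonempty. Then $P_A(G)=1$ if and only if $A$ is a (classical) zero forcing set of $G$.
   Context: Classical zero forcing: given a set of black vertices (the rest white), the color change rule turns a white vertex $v$ black if $v$ is the only white neighbor of some black vertex $u$. A set $S$ is a zero forcing set if starting with $S$ black, finitely many applications of this rule make all of $V(G)$ black. Probabilistic process: for a vertex $u$, $N(u)$ is its open neighborhood, $N[u]=N(u)\cup\{u\}$, $\deg(u)=|N(u)|$. Given a current black set $Z$, $F(u\to v)=0$ if $u\notin Z$, or $v\notin N(u)$, or $N[u]\subseteq Z$; otherwise $F(u\to v)=|N[u]\cap Z|/\deg(u)$. One global application of the probabilistic color change rule: black vertices stay black; independently for every pair $(u,v)$ with $u$ black and $v\in N(u)$ white, $u$ forces $v$ with probability $F(u\to v)$; a white vertex becomes black iff some black neighbor forces it. Starting with black set $A$ at step $0$ and applying this rule repeatedly, let $S^k$ be the set of colorings reachable with positive probability after exactly $k$ steps and $P^{(k)}$ the probability distribution on them. Let $T^k\subseteq S^k$ be the colorings whose black set contains a classical zero forcing set of $G$. Define $P_A(G)=P^{(k_0)}(T^{k_0})$ where $k_0$ is the least $k\ge 0$ with $T^k\neq\emptyset$. *)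

theory Defs
  imports "HOL-Probability.Probability"
begin

definition simple_graph :: "'a set \<Rightarrow> ('a \<Rightarrow> 'a \<Rightarrow> bool) \<Rightarrow> bool" where
  "simple_graph V E \<longleftrightarrow> finite V \<and> (\<forall>u v. E u v \<longrightarrow> u \<in> V \<and> v \<in> V)
     \<and> (\<forall>u v. E u v \<longrightarrow> E v u) \<and> (\<forall>u. \<not> E u u)"

definition connected_graph :: "'a set \<Rightarrow> ('a \<Rightarrow> 'a \<Rightarrow> bool) \<Rightarrow> bool" where
  "connected_graph V E \<longleftrightarrow> (\<forall>u\<in>V. \<forall>v\<in>V. E\<^sup>*\<^sup>* u v)"

definition nbhd :: "'a set \<Rightarrow> ('a \<Rightarrow> 'a \<Rightarrow> bool) \<Rightarrow> 'a \<Rightarrow> 'a set" where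
  "nbhd V E u = {v \<in> V. E u v}"

definition cnbhd :: "'a set \<Rightarrow> ('a \<Rightarrow> 'a \<Rightarrow> bool) \<Rightarrow> 'a \<Rightarrow> 'a set" where
  "cnbhd V E u = insert u (nbhd V E u)"

definition deg :: "'a set \<Rightarrow> ('a \<Rightarrow> 'a \<Rightarrow> bool) \<Rightarrow> 'a \<Rightarrow> nat" where
  "deg V E u = card (nbhd V E u)"

inductive zf_reach :: "'a set \<Rightarrow> ('a \<Rightarrow> 'a \<Rightarrow> bool) \<Rightarrow> 'a set \<Rightarrow> 'a set \<Rightarrow> bool"
  for V E S where
  zf_base: "zf_reach V E S S"
| zf_step: "zf_reach V E S B \<Longrightarrow> u \<in> B \<Longrightarrow> v \<in> nbhd V E u \<Longrightarrow> v \<notin> B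
     \<Longrightarrow> nbhd V E u - B = {v} \<Longrightarrow> zf_reach V E S (insert v B)"

definition zero_forcing_set :: "'a set \<Rightarrow> ('a \<Rightarrow> 'a \<Rightarrow> bool) \<Rightarrow> 'a set \<Rightarrow> bool" where
  "zero_forcing_set V E S \<longleftrightarrow> S \<subseteq> V \<and> zf_reach V E S V"

definition force_prob :: "'a set \<Rightarrow> ('a \<Rightarrow> 'a \<Rightarrow> bool) \<Rightarrow> 'a set \<Rightarrow> 'a \<Rightarrow> 'a \<Rightarrow> real" where
  "force_prob V E Z u v =
     (if u \<notin> Z \<or> v \<notin> nbhd V E u \<or> cnbhd V E u \<subseteq> Z then 0
      else real (card (cnbhd V E u \<inter> Z)) / real (deg V E u))"

definition force_pairs :: "'a set \<Rightarrow> ('a \<Rightarrow> 'a \<Rightarrow> bool) \<Rightarrow> 'a set \<Rightarrow> ('a \<times> 'a) set" where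
  "force_pairs V E Z = {(u, v). u \<in> Z \<and> v \<in> nbhd V E u \<and> v \<notin> Z}"

text \<open>One global application: independently for every pair (u,v), u black, v a white
  neighbour, u forces v with probability F(u->v); v becomes black iff some u forces it.\<close>

definition prob_step :: "'a set \<Rightarrow> ('a \<Rightarrow> 'a \<Rightarrow> bool) \<Rightarrow> 'a set \<Rightarrow> 'a set pmf" where
  "prob_step V E Z =
     map_pmf (\<lambda>\<omega>. Z \<union> {v. \<exists>u. (u, v) \<in> force_pairs V E Z \<and> \<omega> (u, v)})
       (Pi_pmf (force_pairs V E Z) False
          (\<lambda>(u, v). bernoulli_pmf (force_prob V E Z u v)))"

definition prob_dist :: "'a set \<Rightarrow> ('a \<Rightarrow> 'a \<Rightarrow> bool) \<Rightarrow> 'a set \<Rightarrow> nat \<Rightarrow> 'a set pmf" where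
  "prob_dist V E A k = ((\<lambda>D. bind_pmf D (prob_step V E)) ^^ k) (return_pmf A)"

definition T_set :: "'a set \<Rightarrow> ('a \<Rightarrow> 'a \<Rightarrow> bool) \<Rightarrow> 'a set \<Rightarrow> nat \<Rightarrow> 'a set set" where
  "T_set V E A k = {Z \<in> set_pmf (prob_dist V E A k). \<exists>S \<subseteq> Z. zero_forcing_set V E S}"

definition P_A :: "'a set \<Rightarrow> ('a \<Rightarrow> 'a \<Rightarrow> bool) \<Rightarrow> 'a set \<Rightarrow> real" where
  "P_A V E A = (let k0 = (LEAST k. T_set V E A k \<noteq> {})
                in measure_pmf.prob (prob_dist V E A k0) (T_set V E A k0))"

end

theory Submission
  imports Defs
begin

text \<open>
  If A is a zero forcing set then already at step 0 the (deterministic)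
  colouring A lies in T^0, so k0 = 0 and P_A = 1.  Conversely suppose A is not a zero
  forcing set and k0 \<ge> 1 (if no T^k is nonempty, P_A = 0).  By minimality of k0 there is
  a colouring W reachable at step k0 - 1 that contains no zero forcing set.  Among the
  outcomes of one probabilistic step from W there is the "certain" one, in which exactly
  the forces of probability 1 happen.  A force u \<rightarrow> v has probability 1 only if v is the
  unique white neighbour of u, so this outcome W' is obtained from W by classical forces
  and hence is not a zero forcing set either (zero forcing is transitive and upward
  closed).  W' has positive probability at step k0, so P_A < 1.  The argument only uses
  that the graph is finite and loopless.
\<close>

lemma zf_reach_mono:
  assumes "zf_reach V E S B" "S \<subseteq> C"
  shows "zf_reach V E C (B \<union> C)"
  using assms
proof induction
  case zf_base
  then show ?case by (simp add: Un_absorb1 zf_reach.zf_base)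
next
  case (zf_step B u v)
  show ?case
  proof (cases "v \<in> C")
    case True
    then have "insert v B \<union> C = B \<union> C" by auto
    then show ?thesis using zf_step by simp
  next
    case False
    have "nbhd V E u - (B \<union> C) = {v}" using zf_step False by auto
    then have "zf_reach V E C (insert v (B \<union> C))"
      using zf_step False by (intro zf_reach.zf_step) auto
    then show ?thesis by simp
  qed
qed

lemma zf_reach_trans:
  assumes "zf_reach V E B C" "zf_reach V E S B"
  shows "zf_reach V E S C"
  using assms
proof induction
  case zf_base then show ?case .
next
  case (zf_step B' u v)
  then show ?case by (intro zf_reach.zf_step) auto
qed

lemma zero_forcing_set_superset:
  assumes "zero_forcing_set V E S" "S \<subseteq> C" "C \<subseteq> V"
  shows "zero_forcing_set V E C"
proof -
  have "zf_reach V E C (V \<union> C)"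
    using assms zf_reach_mono unfolding zero_forcing_set_def by blast
  moreover have "V \<union> C = V" using assms by auto
  ultimately show ?thesis using assms unfolding zero_forcing_set_def by simp
qed

lemma zero_forcing_set_backward:
  assumes "zf_reach V E W W'" "zero_forcing_set V E W'" "W \<subseteq> V"
  shows "zero_forcing_set V E W"
  using assms zf_reach_trans unfolding zero_forcing_set_def by blast

lemma zf_reach_simultaneous:
  assumes "finite F"
    and forced: "\<And>v. v \<in> F \<Longrightarrow> \<exists>u\<in>W. nbhd V E u - W = {v}"
  shows "zf_reach V E W (W \<union> F)"
  using assms
proof (induction F rule: finite_induct)
  case empty then show ?case by (simp add: zf_reach.zf_base)
next
  case (insert x F)
  then have IH: "zf_reach V E W (W \<union> F)" by auto
  show ?case
  proof (cases "x \<in> W \<union> F")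
    case True
    then have "W \<union> insert x F = W \<union> F" by auto
    then show ?thesis using IH by simp
  next
    case False
    obtain u where u: "u \<in> W" "nbhd V E u - W = {x}" using insert.prems by blast
    have "nbhd V E u - (W \<union> F) = {x}" using u False by auto
    then have "zf_reach V E W (insert x (W \<union> F))"
      using IH u False by (intro zf_reach.zf_step) auto
    then show ?thesis by simp
  qed
qed

lemma certain_force_is_classical:
  assumes irr: "\<And>u. \<not> E u u" and fin: "finite V"
    and pair: "(u, v) \<in> force_pairs V E W" and ge: "force_prob V E W u v \<ge> 1"
  shows "nbhd V E u - W = {v}"
proof -
  have uW: "u \<in> W" and vN: "v \<in> nbhd V E u" and vW: "v \<notin> W"
    using pair unfolding force_pairs_def by auto
  have finN: "finite (nbhd V E u)" using fin unfolding nbhd_def by auto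
  have uN: "u \<notin> nbhd V E u" using irr unfolding nbhd_def by auto
  have not_all_black: "\<not> cnbhd V E u \<subseteq> W" using vN vW unfolding cnbhd_def by auto
  have "cnbhd V E u \<inter> W = insert u (nbhd V E u \<inter> W)" using uW unfolding cnbhd_def by auto
  then have black_count: "card (cnbhd V E u \<inter> W) = Suc (card (nbhd V E u \<inter> W))"
    using uN finN by (simp add: card_insert_if)
  have deg_pos: "deg V E u > 0" unfolding deg_def using vN finN card_gt_0_iff by blast
  have "real (card (cnbhd V E u \<inter> W)) / real (deg V E u) \<ge> 1"
    using ge uW vN not_all_black unfolding force_prob_def by (auto split: if_splits)
  then have "card (nbhd V E u) \<le> Suc (card (nbhd V E u \<inter> W))"
    using deg_pos black_count unfolding deg_def by (simp add: divide_simps)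
  moreover have "card (nbhd V E u - W) = card (nbhd V E u) - card (nbhd V E u \<inter> W)"
    using finN by (metis card_Diff_subset_Int finite_Int)
  ultimately have "card (nbhd V E u - W) \<le> 1" by linarith
  moreover have "v \<in> nbhd V E u - W" using vN vW by auto
  moreover have "finite (nbhd V E u - W)" using finN by auto
  ultimately show ?thesis
    using card_le_Suc0_iff_eq[of "nbhd V E u - W"] by auto
qed

text \<open>A Bernoulli trial with parameter p succeeds with positive probability if p \<ge> 1
  and fails with positive probability if p < 1.\<close>
lemma bernoulli_certain_outcome: "(p \<ge> 1) \<in> set_pmf (bernoulli_pmf p)"
  by (cases "p \<ge> 1") (auto simp: set_pmf_iff bernoulli_pmf.rep_eq)

lemma force_pairs_finite:
  assumes "finite V" "W \<subseteq> V"
  shows "finite (force_pairs V E W)"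
proof (rule finite_subset)
  show "force_pairs V E W \<subseteq> V \<times> V"
    using assms(2) unfolding force_pairs_def nbhd_def by auto
  show "finite (V \<times> V)" using assms(1) by simp
qed

text \<open>The outcome in which exactly the forces of probability 1 happen has positive
  probability, and it arises from W by classical forces.\<close>
lemma prob_step_classical_outcome:
  assumes irr: "\<And>u. \<not> E u u" and fin: "finite V" and WV: "W \<subseteq> V"
  shows "\<exists>W'. W' \<in> set_pmf (prob_step V E W) \<and> zf_reach V E W W'"
proof -
  define I where "I = force_pairs V E W"
  define certain where "certain = (\<lambda>x. x \<in> I \<and> force_prob V E W (fst x) (snd x) \<ge> 1)"
  define F where "F = {v. \<exists>u. (u, v) \<in> I \<and> certain (u, v)}"
  have finI: "finite I" unfolding I_def using force_pairs_finite fin WV by blast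
  have "certain \<in> set_pmf (Pi_pmf I False (\<lambda>(u, v). bernoulli_pmf (force_prob V E W u v)))"
    unfolding set_Pi_pmf[OF finI] PiE_dflt_def
    using bernoulli_certain_outcome by (auto simp: certain_def)
  then have outcome: "W \<union> F \<in> set_pmf (prob_step V E W)"
    unfolding prob_step_def I_def F_def by auto
  have "finite F" unfolding F_def using finI
    by (rule_tac finite_subset[of _ "snd ` I"]) force+
  moreover have "\<exists>u\<in>W. nbhd V E u - W = {v}" if "v \<in> F" for v
  proof -
    obtain u where pair: "(u, v) \<in> I" and ge: "force_prob V E W u v \<ge> 1"
      using \<open>v \<in> F\<close> unfolding F_def certain_def by auto
    then have "nbhd V E u - W = {v}"
      using certain_force_is_classical[of E, OF irr fin] unfolding I_def by blast
    then show ?thesis using pair unfolding I_def force_pairs_def by auto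
  qed
  ultimately have "zf_reach V E W (W \<union> F)" by (rule zf_reach_simultaneous)
  then show ?thesis using outcome by blast
qed

lemma set_pmf_prob_dist_Suc:
  "set_pmf (prob_dist V E A (Suc k))
     = (\<Union>W\<in>set_pmf (prob_dist V E A k). set_pmf (prob_step V E W))"
  unfolding prob_dist_def by simp

lemma prob_dist_subset:
  assumes "A \<subseteq> V" "Z \<in> set_pmf (prob_dist V E A k)"
  shows "Z \<subseteq> V"
  using assms(2)
proof (induction k arbitrary: Z)
  case 0 then show ?case using assms(1) by (simp add: prob_dist_def)
next
  case (Suc k)
  then show ?case
    unfolding set_pmf_prob_dist_Suc prob_step_def force_pairs_def nbhd_def by auto
qed

lemma T_set_0:
  assumes "A \<subseteq> V"
  shows "T_set V E A 0 = (if zero_forcing_set V E A then {A} else {})"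
  unfolding T_set_def prob_dist_def using zero_forcing_set_superset assms by auto

text \<open>If no colouring at step j contains a zero forcing set, then some colouring at step
  j + 1 does not contain one either: the certain outcome of a non-forcing colouring.\<close>
lemma T_set_Suc_incomplete:
  assumes "simple_graph V E" "A \<subseteq> V" "T_set V E A j = {}"
  shows "\<exists>W'\<in>set_pmf (prob_dist V E A (Suc j)). W' \<notin> T_set V E A (Suc j)"
proof -
  have fin: "finite V" and irr: "\<And>u. \<not> E u u"
    using assms(1) unfolding simple_graph_def by auto
  obtain W where W: "W \<in> set_pmf (prob_dist V E A j)" using set_pmf_not_empty by fast
  have WV: "W \<subseteq> V" using prob_dist_subset[OF assms(2) W] .
  obtain W' where W': "W' \<in> set_pmf (prob_step V E W)" "zf_reach V E W W'"
    using prob_step_classical_outcome[of E, OF irr fin WV] by blast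
  have W'_reach: "W' \<in> set_pmf (prob_dist V E A (Suc j))"
    using W W' unfolding set_pmf_prob_dist_Suc by blast
  have "W' \<notin> T_set V E A (Suc j)"
  proof
    assume "W' \<in> T_set V E A (Suc j)"
    then obtain S where "S \<subseteq> W'" "zero_forcing_set V E S" unfolding T_set_def by auto
    then have "zero_forcing_set V E W'"
      using zero_forcing_set_superset prob_dist_subset[OF assms(2) W'_reach] by blast
    then have "W \<in> T_set V E A j"
      using zero_forcing_set_backward[OF W'(2) _ WV] W unfolding T_set_def by auto
    with assms(3) show False by simp
  qed
  with W'_reach show ?thesis by blast
qed

lemma prob_one_imp_support_subset:
  assumes "measure_pmf.prob p S = 1"
  shows "set_pmf p \<subseteq> S"
proof -
  have "AE x in measure_pmf p. x \<in> S"
    using assms by (subst (asm) measure_pmf.prob_eq_1) auto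
  then show ?thesis by (auto simp: AE_measure_pmf_iff)
qed

theorem mainTheorem2:
  fixes V :: "'a set" and E :: "'a \<Rightarrow> 'a \<Rightarrow> bool" and A :: "'a set"
  assumes "simple_graph V E"
    and "connected_graph V E"
    and "card V \<ge> 2"
    and "A \<subseteq> V" and "A \<noteq> {}"
  shows "P_A V E A = 1 \<longleftrightarrow> zero_forcing_set V E A"
proof
  assume zf: "zero_forcing_set V E A"
  then have "(LEAST k. T_set V E A k \<noteq> {}) = 0"
    using T_set_0[OF assms(4)] by (simp add: Least_eq_0)
  then show "P_A V E A = 1"
    unfolding P_A_def Let_def using T_set_0[OF assms(4)] zf by (simp add: prob_dist_def)
next
  assume P1: "P_A V E A = 1"
  define k0 where "k0 = (LEAST k. T_set V E A k \<noteq> {})"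
  have "measure_pmf.prob (prob_dist V E A k0) (T_set V E A k0) = 1"
    using P1 unfolding P_A_def Let_def k0_def by simp
  then have support: "set_pmf (prob_dist V E A k0) \<subseteq> T_set V E A k0"
    by (rule prob_one_imp_support_subset)
  then have "T_set V E A k0 \<noteq> {}" using set_pmf_not_empty by (metis subset_empty)
  show "zero_forcing_set V E A"
  proof (rule ccontr)
    assume "\<not> zero_forcing_set V E A"
    then have "T_set V E A 0 = {}" using T_set_0[OF assms(4)] by simp
    then have "k0 \<noteq> 0" using \<open>T_set V E A k0 \<noteq> {}\<close> by metis
    then obtain j where j: "k0 = Suc j" using not0_implies_Suc by blast
    have "j < k0" using j by simp
    then have "T_set V E A j = {}"
      using not_less_Least[of j "\<lambda>k. T_set V E A k \<noteq> {}"] unfolding k0_def by blast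
    then obtain W' where "W' \<in> set_pmf (prob_dist V E A k0)" "W' \<notin> T_set V E A k0"
      using T_set_Suc_incomplete[OF assms(1,4)] unfolding j by blast
    with support show False by blast
  qed
qed

end
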